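(* Let $x$ be a shallow feasible solution to the integer quadratic program (minimize $x^TQx$ subject to $Ax\le b$, $Cx=d$, $x\in\mathbb{Z}^n$). Then there exist a row $a_j^T$ of $A$ and an integer $b_j'$ such that $a_j^Tx=b_j'$ and $b_j'\in\{b_j-\alpha\cdot n\cdot\Delta^2,\ldots,b_j\}$. Further, $a_j^T$ is linearly independent from the rows of $C$.
   Context: Setting: $Q$ is an $n\times n$ integer symmetric matrix, $A$ an $m\times n$ integer matrix with rows $a_1^T,\dots,a_m^T$, $b\in\mathbb{Z}^m$ with entries $b_j$, $C$ an integer matrix with $n$ columns and linearly independent rows, and $d$ an integer vector. $\alpha$ is the maximum absolute value of an entry of $Q$ and $A$, and $\Delta$ is the maximum absolute value of the determinant of a square submatrix of $C$. $y_1,\dots,y_r$ is a basis of the nullspace of $C$ consisting of integer vectors with $|y_i|_\infty\le\Delta^2$ for all $i$, and $Y$ is the set of these vectors. A feasible solution is an $x\in\mathbb{Z}^n$ with $Ax\le b$ and $Cx=d$. A feasible solution $x$ is deep if $x+y_i$ and $x-y_i$ are feasible solutions for all $y_i\in Y$, and shallow otherwise. *)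

theory Defs
  imports "Jordan_Normal_Form.Determinant" "Jordan_Normal_Form.DL_Submatrix"
begin

definition max_abs_entry :: "int mat \<Rightarrow> int" where
  "max_abs_entry M = Max (insert 0 {\<bar>M $$ (i,j)\<bar> | i j. i < dim_row M \<and> j < dim_col M})"

definition alpha :: "int mat \<Rightarrow> int mat \<Rightarrow> int" where
  "alpha Q A = max (max_abs_entry Q) (max_abs_entry A)"

definition Delta :: "int mat \<Rightarrow> int" where
  "Delta C = Max {\<bar>det (submatrix C I J)\<bar> | I J.
       I \<subseteq> {..<dim_row C} \<and> J \<subseteq> {..<dim_col C} \<and> card I = card J}"

definition lin_indep_vecs :: "nat \<Rightarrow> int vec list \<Rightarrow> bool" where
  "lin_indep_vecs n vs \<longleftrightarrow>
     (\<forall>c :: nat \<Rightarrow> rat. (\<forall>k<n. (\<Sum>i<length vs. c i * of_int (vs ! i $ k)) = 0)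
        \<longrightarrow> (\<forall>i<length vs. c i = 0))"

definition nullspace_basis :: "int mat \<Rightarrow> int vec set \<Rightarrow> bool" where
  "nullspace_basis C Y \<longleftrightarrow>
     finite Y \<and> Y \<subseteq> carrier_vec (dim_col C) \<and>
     (\<forall>y\<in>Y. mult_mat_vec C y = 0\<^sub>v (dim_row C)) \<and>
     (\<forall>c :: int vec \<Rightarrow> rat. (\<forall>k<dim_col C. (\<Sum>y\<in>Y. c y * of_int (y $ k)) = 0)
        \<longrightarrow> (\<forall>y\<in>Y. c y = 0)) \<and>
     (\<forall>z :: nat \<Rightarrow> rat.
        (\<forall>i<dim_row C. (\<Sum>k<dim_col C. of_int (C $$ (i,k)) * z k) = 0)
        \<longrightarrow> (\<exists>c :: int vec \<Rightarrow> rat. \<forall>k<dim_col C. z k = (\<Sum>y\<in>Y. c y * of_int (y $ k))))"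

definition feasible :: "int mat \<Rightarrow> int vec \<Rightarrow> int mat \<Rightarrow> int vec \<Rightarrow> int vec \<Rightarrow> bool" where
  "feasible A b C d x \<longleftrightarrow> x \<in> carrier_vec (dim_col A) \<and>
     (\<forall>j<dim_row A. row A j \<bullet> x \<le> b $ j) \<and> mult_mat_vec C x = d"

definition deep :: "int mat \<Rightarrow> int vec \<Rightarrow> int mat \<Rightarrow> int vec \<Rightarrow> int vec set \<Rightarrow> int vec \<Rightarrow> bool" where
  "deep A b C d Y x \<longleftrightarrow> feasible A b C d x \<and>
     (\<forall>y\<in>Y. feasible A b C d (x + y) \<and> feasible A b C d (x - y))"

definition shallow :: "int mat \<Rightarrow> int vec \<Rightarrow> int mat \<Rightarrow> int vec \<Rightarrow> int vec set \<Rightarrow> int vec \<Rightarrow> bool" where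
  "shallow A b C d Y x \<longleftrightarrow> feasible A b C d x \<and> \<not> deep A b C d Y x"

end

theory Submission
  imports Defs
begin

text \<open>If x is shallow, some direction w = y or w = -y with y in Y leads from x to a point
  x + w that still satisfies Cx = d, since Cw = 0, but violates some inequality a_j x \<le> b_j.
  Each entry of a_j and of w is bounded by \<alpha> and \<Delta>^2 respectively, so a_j w, and with
  it the slack b_j - a_j x, is at most \<alpha> n \<Delta>^2. Moreover a_j w \<noteq> 0 while every row of C
  annihilates w, so a_j is not in the row space of C.\<close>

lemma abs_entry_le_max_abs_entry:
  assumes "i < dim_row M" "j < dim_col M"
  shows "\<bar>M $$ (i,j)\<bar> \<le> max_abs_entry M"
proof -
  have "{\<bar>M $$ (i,j)\<bar> | i j. i < dim_row M \<and> j < dim_col M}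
          \<subseteq> (\<lambda>(i,j). \<bar>M $$ (i,j)\<bar>) ` ({..<dim_row M} \<times> {..<dim_col M})" by auto
  then have "finite {\<bar>M $$ (i,j)\<bar> | i j. i < dim_row M \<and> j < dim_col M}"
    by (rule finite_subset) auto
  then show ?thesis
    unfolding max_abs_entry_def using assms by (intro Max_ge) auto
qed

lemma abs_entry_le_alpha:
  assumes "i < dim_row A" "j < dim_col A"
  shows "\<bar>A $$ (i,j)\<bar> \<le> alpha Q A"
  using abs_entry_le_max_abs_entry[OF assms] unfolding alpha_def by linarith

lemma abs_scalar_prod_le:
  fixes v w :: "'a :: linordered_idom vec"
  assumes "v \<in> carrier_vec n" "w \<in> carrier_vec n"
    and "\<And>k. k < n \<Longrightarrow> \<bar>v $ k\<bar> \<le> a" and "\<And>k. k < n \<Longrightarrow> \<bar>w $ k\<bar> \<le> c"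
  shows "\<bar>v \<bullet> w\<bar> \<le> of_nat n * a * c"
proof -
  have "\<bar>v \<bullet> w\<bar> = \<bar>\<Sum>k<n. v $ k * w $ k\<bar>"
    using assms(2) by (simp add: scalar_prod_def lessThan_atLeast0)
  also have "\<dots> \<le> (\<Sum>k<n. \<bar>v $ k\<bar> * \<bar>w $ k\<bar>)"
    unfolding abs_mult[symmetric] by (rule sum_abs)
  also have "\<dots> \<le> (\<Sum>k<n. a * c)"
  proof (rule sum_mono)
    fix k assume "k \<in> {..<n}"
    then show "\<bar>v $ k\<bar> * \<bar>w $ k\<bar> \<le> a * c"
      using assms(3,4) by (intro mult_mono) (auto intro: order_trans[OF abs_ge_zero])
  qed
  finally show ?thesis by simp
qed

lemma lin_comb_scalar_prod:
  fixes vs :: "int vec list" and c :: "nat \<Rightarrow> rat"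
  assumes w: "w \<in> carrier_vec n"
  shows "(\<Sum>k<n. (\<Sum>i<length vs. c i * of_int (vs ! i $ k)) * of_int (w $ k))
           = (\<Sum>i<length vs. c i * of_int (vs ! i \<bullet> w))"
proof -
  have sp: "of_int (v \<bullet> w) = (\<Sum>k<n. of_int (v $ k) * of_int (w $ k) :: rat)" for v
    using w by (simp add: scalar_prod_def lessThan_atLeast0)
  have "(\<Sum>k<n. (\<Sum>i<length vs. c i * of_int (vs ! i $ k)) * of_int (w $ k))
          = (\<Sum>k<n. \<Sum>i<length vs. c i * (of_int (vs ! i $ k) * of_int (w $ k)))"
    by (simp add: sum_distrib_right mult.assoc)
  also have "\<dots> = (\<Sum>i<length vs. \<Sum>k<n. c i * (of_int (vs ! i $ k) * of_int (w $ k)))"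
    by (rule sum.swap)
  also have "\<dots> = (\<Sum>i<length vs. c i * of_int (vs ! i \<bullet> w))"
    by (simp add: sp sum_distrib_left)
  finally show ?thesis .
qed

text \<open>Pairing a vanishing linear combination with w kills every v \<in> vs and leaves only the
  coefficient of u, which must therefore be zero.\<close>

lemma lin_indep_vecs_snoc:
  assumes indep: "lin_indep_vecs n vs" and w: "w \<in> carrier_vec n"
    and orth: "\<And>v. v \<in> set vs \<Longrightarrow> v \<bullet> w = 0" and uw: "u \<bullet> w \<noteq> 0"
  shows "lin_indep_vecs n (vs @ [u])"
  unfolding lin_indep_vecs_def
proof (intro allI impI)
  fix c :: "nat \<Rightarrow> rat" and i
  let ?l = "length vs"
  assume comb: "\<forall>k<n. (\<Sum>i<length (vs @ [u]). c i * of_int ((vs @ [u]) ! i $ k)) = 0"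
    and i: "i < length (vs @ [u])"
  have split: "(\<Sum>i<length (vs @ [u]). c i * f ((vs @ [u]) ! i))
                 = (\<Sum>i<?l. c i * f (vs ! i)) + c ?l * f u" for f :: "int vec \<Rightarrow> rat"
    by (auto simp: nth_append intro: sum.cong)
  have "0 = (\<Sum>k<n. (\<Sum>i<length (vs @ [u]). c i * of_int ((vs @ [u]) ! i $ k)) * of_int (w $ k))"
    using comb by simp
  also have "\<dots> = (\<Sum>i<length (vs @ [u]). c i * of_int ((vs @ [u]) ! i \<bullet> w))"
    by (rule lin_comb_scalar_prod[OF w])
  also have "\<dots> = c ?l * of_int (u \<bullet> w)"
    unfolding split[of "\<lambda>v. of_int (v \<bullet> w)"] using orth by simp
  finally have cu: "c ?l = 0" using uw by simp
  then have "\<forall>k<n. (\<Sum>i<?l. c i * of_int (vs ! i $ k)) = 0"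
    using comb split[of "\<lambda>v. of_int (v $ k)" for k] by simp
  then have "\<forall>i<?l. c i = 0" using indep unfolding lin_indep_vecs_def by blast
  then show "c i = 0" using i cu by (auto simp: less_Suc_eq)
qed

lemma scalar_prod_rows_eq_0:
  assumes "C *\<^sub>v w = 0\<^sub>v (dim_row C)" "v \<in> set (rows C)"
  shows "v \<bullet> w = 0"
proof -
  obtain i where "i < dim_row C" "v = row C i"
    using assms(2) by (auto simp: in_set_conv_nth)
  then show ?thesis using index_mult_mat_vec[of i C w] assms(1) by simp
qed

lemma mult_mat_vec_uminus_eq_0:
  fixes C :: "'a :: ring mat"
  assumes "C *\<^sub>v y = 0\<^sub>v (dim_row C)" "y \<in> carrier_vec (dim_col C)"
  shows "C *\<^sub>v (- y) = 0\<^sub>v (dim_row C)"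
proof (rule eq_vecI)
  fix i assume "i < dim_vec (0\<^sub>v (dim_row C) :: 'a vec)"
  then have "i < dim_row C" by simp
  moreover have "row C i \<bullet> (- y) = - (row C i \<bullet> y)"
    using assms(2) by (intro scalar_prod_uminus_right) auto
  ultimately show "(C *\<^sub>v (- y)) $ i = 0\<^sub>v (dim_row C) $ i"
    using assms(1) index_mult_mat_vec[of i C y] by simp
qed simp

lemma feasible_add_nullspace_vec_iff:
  assumes x: "feasible A b C d x" and w: "w \<in> carrier_vec (dim_col A)"
    and C: "dim_col C = dim_col A" and Cw: "C *\<^sub>v w = 0\<^sub>v (dim_row C)"
  shows "feasible A b C d (x + w) \<longleftrightarrow> (\<forall>j<dim_row A. row A j \<bullet> (x + w) \<le> b $ j)"
proof -
  have "x \<in> carrier_vec (dim_col A)" and Cx: "C *\<^sub>v x = d" using x unfolding feasible_def by auto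
  then have "C *\<^sub>v (x + w) = d"
    using w C Cw by (metis carrier_mat_triv mult_add_distrib_mat_vec mult_mat_vec_carrier
        right_zero_vec)
  then show ?thesis using \<open>x \<in> _\<close> w unfolding feasible_def by auto
qed

lemma shallow_obtains_infeasible_step:
  assumes "shallow A b C d Y x" and "Y \<subseteq> carrier_vec (dim_col A)"
  obtains y w where "y \<in> Y" "w = y \<or> w = - y" "\<not> feasible A b C d (x + w)"
proof -
  obtain y where y: "y \<in> Y" and "\<not> feasible A b C d (x + y) \<or> \<not> feasible A b C d (x - y)"
    using assms(1) unfolding shallow_def deep_def by auto
  moreover have "x - y = x + (- y)"
    using assms y by (intro minus_add_uminus_vec) (auto simp: shallow_def feasible_def)
  ultimately show ?thesis using that by metis
qed

theorem lemma2:
  fixes Q A C :: "int mat" and b d x :: "int vec" and Y :: "int vec set" and n m :: nat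
  assumes "Q \<in> carrier_mat n n" and "Q = transpose_mat Q"
    and "A \<in> carrier_mat m n" and "b \<in> carrier_vec m"
    and "dim_col C = n" and "d \<in> carrier_vec (dim_row C)"
    and "lin_indep_vecs n (rows C)"
    and "nullspace_basis C Y"
    and "\<forall>y\<in>Y. \<forall>k<n. \<bar>y $ k\<bar> \<le> (Delta C)\<^sup>2"
    and "shallow A b C d Y x"
  shows "\<exists>j<m. \<exists>b' :: int. row A j \<bullet> x = b' \<and>
           b' \<in> {b $ j - alpha Q A * int n * (Delta C)\<^sup>2 .. b $ j} \<and>
           lin_indep_vecs n (rows C @ [row A j])"
proof -
  note A = \<open>A \<in> carrier_mat m n\<close> and C = \<open>dim_col C = n\<close>
  have Y: "Y \<subseteq> carrier_vec n" "\<forall>y\<in>Y. C *\<^sub>v y = 0\<^sub>v (dim_row C)"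
    using assms(8) C unfolding nullspace_basis_def by auto
  obtain y w where y: "y \<in> Y" and w: "w = y \<or> w = - y" and infeasible: "\<not> feasible A b C d (x + w)"
    using shallow_obtains_infeasible_step[OF assms(10)] Y A by auto
  have wn: "w \<in> carrier_vec n" and Cw: "C *\<^sub>v w = 0\<^sub>v (dim_row C)"
    using w y Y C mult_mat_vec_uminus_eq_0 by auto
  have feas: "feasible A b C d x" using assms(10) unfolding shallow_def by simp
  then have x: "x \<in> carrier_vec n" and satisfied: "\<forall>j<m. row A j \<bullet> x \<le> b $ j"
    using A unfolding feasible_def by auto
  obtain j where j: "j < m" and violated: "b $ j < row A j \<bullet> x + row A j \<bullet> w"
    using infeasible feasible_add_nullspace_vec_iff[OF feas] A C wn Cw x
    by (auto simp: scalar_prod_add_distrib[of _ n])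
  have "\<bar>row A j \<bullet> w\<bar> \<le> int n * alpha Q A * (Delta C)\<^sup>2"
    using A j wn w y assms(9)
    by (intro abs_scalar_prod_le[where n = n]) (auto intro: abs_entry_le_alpha)
  moreover have nonzero: "row A j \<bullet> w \<noteq> 0" using satisfied j violated by fastforce
  ultimately have "row A j \<bullet> x \<in> {b $ j - alpha Q A * int n * (Delta C)\<^sup>2 .. b $ j}"
    using satisfied j violated by (auto simp: mult.commute[of "alpha Q A"])
  moreover have "lin_indep_vecs n (rows C @ [row A j])"
    using lin_indep_vecs_snoc[OF assms(7) wn scalar_prod_rows_eq_0[OF Cw] nonzero] .
  ultimately show ?thesis using j by blast
qed

end
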